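(* Let $G$ be a locally finite quasi-transitive graph. Then $G$ has a periodic orientation if and only if there is a subgroup $\Gamma\subseteq\mathrm{Aut}(G)$ acting quasi-transitively on $V(G)$ such that no element of $\Gamma$ inverts an edge of $G$.
   Context: Locally finite: all degrees finite; quasi-transitive: finitely many $\mathrm{Aut}(G)$-orbits on $V(G)$; a group acts quasi-transitively if it has finitely many orbits on $V(G)$. An automorphism $g$ inverts an edge $uv$ if $g(u)=v$ and $g(v)=u$. An orientation of $G$ is periodic if the subgroup of automorphisms mapping every edge to an edge with the same orientation has finitely many orbits on $V(G)$. *)

theory Defs
  imports Main
begin

text \<open>A (simple, undirected) graph with vertex set the whole type 'a,
  given by a symmetric irreflexive adjacency relation E.\<close>

definition simple_graph :: "('a \<Rightarrow> 'a \<Rightarrow> bool) \<Rightarrow> bool" where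
  "simple_graph E \<longleftrightarrow> (\<forall>u v. E u v \<longrightarrow> E v u) \<and> (\<forall>v. \<not> E v v)"

definition locally_finite :: "('a \<Rightarrow> 'a \<Rightarrow> bool) \<Rightarrow> bool" where
  "locally_finite E \<longleftrightarrow> (\<forall>v. finite {u. E v u})"

definition Aut :: "('a \<Rightarrow> 'a \<Rightarrow> bool) \<Rightarrow> ('a \<Rightarrow> 'a) set" where
  "Aut E = {f. bij f \<and> (\<forall>u v. E u v \<longleftrightarrow> E (f u) (f v))}"

definition orbit :: "('a \<Rightarrow> 'a) set \<Rightarrow> 'a \<Rightarrow> 'a set" where
  "orbit \<Gamma> v = (\<lambda>g. g v) ` \<Gamma>"

definition acts_quasi_transitively :: "('a \<Rightarrow> 'a) set \<Rightarrow> bool" where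
  "acts_quasi_transitively \<Gamma> \<longleftrightarrow> finite (range (orbit \<Gamma>))"

definition quasi_transitive :: "('a \<Rightarrow> 'a \<Rightarrow> bool) \<Rightarrow> bool" where
  "quasi_transitive E \<longleftrightarrow> acts_quasi_transitively (Aut E)"

definition subgroup_Aut :: "('a \<Rightarrow> 'a) set \<Rightarrow> ('a \<Rightarrow> 'a \<Rightarrow> bool) \<Rightarrow> bool" where
  "subgroup_Aut \<Gamma> E \<longleftrightarrow> \<Gamma> \<subseteq> Aut E \<and> id \<in> \<Gamma> \<and>
     (\<forall>f\<in>\<Gamma>. \<forall>g\<in>\<Gamma>. f \<circ> g \<in> \<Gamma>) \<and> (\<forall>f\<in>\<Gamma>. inv f \<in> \<Gamma>)"

definition inverts_edge :: "('a \<Rightarrow> 'a \<Rightarrow> bool) \<Rightarrow> ('a \<Rightarrow> 'a) \<Rightarrow> 'a \<Rightarrow> 'a \<Rightarrow> bool" where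
  "inverts_edge E g u v \<longleftrightarrow> E u v \<and> g u = v \<and> g v = u"

definition orientation :: "('a \<Rightarrow> 'a \<Rightarrow> bool) \<Rightarrow> ('a \<Rightarrow> 'a \<Rightarrow> bool) \<Rightarrow> bool" where
  "orientation E D \<longleftrightarrow> (\<forall>u v. D u v \<longrightarrow> E u v) \<and>
     (\<forall>u v. E u v \<longrightarrow> (D u v \<longleftrightarrow> \<not> D v u))"

definition orientation_preserving :: "('a \<Rightarrow> 'a \<Rightarrow> bool) \<Rightarrow> ('a \<Rightarrow> 'a \<Rightarrow> bool) \<Rightarrow> ('a \<Rightarrow> 'a) set" where
  "orientation_preserving E D = {g \<in> Aut E. \<forall>u v. D u v \<longrightarrow> D (g u) (g v)}"

definition periodic_orientation :: "('a \<Rightarrow> 'a \<Rightarrow> bool) \<Rightarrow> ('a \<Rightarrow> 'a \<Rightarrow> bool) \<Rightarrow> bool" where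
  "periodic_orientation E D \<longleftrightarrow> orientation E D \<and>
     acts_quasi_transitively (orientation_preserving E D)"

end

theory Submission
  imports Defs
begin

text \<open>An orientation is preserved by an automorphism inverting one of its edges only if
  that edge points both ways, so orientation-preserving groups never invert edges.
  Conversely, given a group \<Gamma> without inversions, pick one ordered pair in every
  \<Gamma>-orbit of edges and orient each edge like the representative of its orbit.  An edge
  would receive both directions only if some element of \<Gamma> swapped its endpoints, and
  \<Gamma> preserves the resulting orientation, so the orientation-preserving automorphisms
  contain \<Gamma> and have at most as many orbits.\<close>

lemma subgroup_Aut_bij: "subgroup_Aut \<Gamma> E \<Longrightarrow> g \<in> \<Gamma> \<Longrightarrow> bij g"
  by (auto simp: subgroup_Aut_def Aut_def)

lemma subgroup_Aut_adj_iff: "subgroup_Aut \<Gamma> E \<Longrightarrow> g \<in> \<Gamma> \<Longrightarrow> E (g u) (g v) \<longleftrightarrow> E u v"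
  by (auto simp: subgroup_Aut_def Aut_def)

lemma subgroup_Aut_id: "subgroup_Aut \<Gamma> E \<Longrightarrow> id \<in> \<Gamma>"
  by (simp add: subgroup_Aut_def)

lemma subgroup_Aut_comp: "subgroup_Aut \<Gamma> E \<Longrightarrow> f \<in> \<Gamma> \<Longrightarrow> g \<in> \<Gamma> \<Longrightarrow> f \<circ> g \<in> \<Gamma>"
  by (simp add: subgroup_Aut_def)

lemma subgroup_Aut_inv: "subgroup_Aut \<Gamma> E \<Longrightarrow> g \<in> \<Gamma> \<Longrightarrow> inv g \<in> \<Gamma>"
  by (simp add: subgroup_Aut_def)

lemma subgroup_Aut_inv_apply:
  "subgroup_Aut \<Gamma> E \<Longrightarrow> g \<in> \<Gamma> \<Longrightarrow> inv g (g x) = x"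
  by (meson bij_is_inj inv_f_f subgroup_Aut_bij)

lemma subgroup_Aut_right_translation:
  assumes \<Gamma>: "subgroup_Aut \<Gamma> E" and g: "g \<in> \<Gamma>"
  shows "(\<lambda>h. h \<circ> g) ` \<Gamma> = \<Gamma>"
proof
  show "(\<lambda>h. h \<circ> g) ` \<Gamma> \<subseteq> \<Gamma>"
    using subgroup_Aut_comp[OF \<Gamma> _ g] by blast
  have "h = (h \<circ> inv g) \<circ> g" for h :: "'a \<Rightarrow> 'a"
    using subgroup_Aut_inv_apply[OF \<Gamma> g] by (simp add: fun_eq_iff)
  then show "\<Gamma> \<subseteq> (\<lambda>h. h \<circ> g) ` \<Gamma>"
    using subgroup_Aut_comp[OF \<Gamma> _ subgroup_Aut_inv[OF \<Gamma> g]] by blast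
qed

lemma orbit_apply_eq:
  assumes "subgroup_Aut \<Gamma> E" and "g \<in> \<Gamma>"
  shows "orbit \<Gamma> (g v) = orbit \<Gamma> v"
proof -
  have "orbit \<Gamma> (g v) = orbit ((\<lambda>h. h \<circ> g) ` \<Gamma>) v"
    by (simp add: orbit_def image_image)
  then show ?thesis
    by (simp add: subgroup_Aut_right_translation[OF assms])
qed

text \<open>Each \<Gamma>'-orbit is the union of the \<Gamma>'-orbits of the points of a \<Gamma>-orbit, so the
  \<Gamma>'-orbits are an image of the \<Gamma>-orbits.\<close>

lemma acts_quasi_transitively_supergroup:
  assumes \<Gamma>': "subgroup_Aut \<Gamma>' E" and "id \<in> \<Gamma>" and "\<Gamma> \<subseteq> \<Gamma>'"
    and "acts_quasi_transitively \<Gamma>"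
  shows "acts_quasi_transitively \<Gamma>'"
proof -
  have "orbit \<Gamma>' ` orbit \<Gamma> v = {orbit \<Gamma>' v}" for v
  proof -
    have "orbit \<Gamma>' w = orbit \<Gamma>' v" if "w \<in> orbit \<Gamma> v" for w
    proof -
      obtain g where "g \<in> \<Gamma>" "w = g v"
        using \<open>w \<in> orbit \<Gamma> v\<close> by (auto simp: orbit_def)
      then show ?thesis
        using orbit_apply_eq[OF \<Gamma>'] \<open>\<Gamma> \<subseteq> \<Gamma>'\<close> by blast
    qed
    moreover have "v \<in> orbit \<Gamma> v"
      unfolding orbit_def by (rule rev_image_eqI[OF \<open>id \<in> \<Gamma>\<close>]) simp
    ultimately show ?thesis by blast
  qed
  then have "range (orbit \<Gamma>') = (\<lambda>S. \<Union> (orbit \<Gamma>' ` S)) ` range (orbit \<Gamma>)"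
    by (simp add: image_image)
  then show ?thesis
    using \<open>acts_quasi_transitively \<Gamma>\<close> by (simp add: acts_quasi_transitively_def)
qed

lemma orientation_preserving_inv:
  assumes D: "orientation E D" and g: "g \<in> orientation_preserving E D"
  shows "inv g \<in> orientation_preserving E D"
proof -
  have "bij g" and adj: "\<And>u v. E u v \<longleftrightarrow> E (g u) (g v)"
    and pres: "\<And>u v. D u v \<Longrightarrow> D (g u) (g v)"
    using g by (auto simp: orientation_preserving_def Aut_def)
  have g_inv: "g (inv g x) = x" for x
    using \<open>bij g\<close> by (simp add: bij_is_surj surj_f_inv_f)
  have adj_inv: "E u v \<longleftrightarrow> E (inv g u) (inv g v)" for u v
    using adj[of "inv g u" "inv g v"] by (simp add: g_inv)
  have "D (inv g u) (inv g v)" if "D u v" for u v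
  proof (rule ccontr)
    assume "\<not> D (inv g u) (inv g v)"
    moreover have "E u v" using that D by (simp add: orientation_def)
    ultimately have "D (inv g v) (inv g u)"
      using adj_inv D by (simp add: orientation_def)
    then have "D v u" using pres by (metis g_inv)
    with \<open>D u v\<close> \<open>E u v\<close> D show False by (simp add: orientation_def)
  qed
  then show ?thesis
    using \<open>bij g\<close> adj_inv by (simp add: orientation_preserving_def Aut_def bij_imp_bij_inv)
qed

lemma subgroup_Aut_orientation_preserving:
  "orientation E D \<Longrightarrow> subgroup_Aut (orientation_preserving E D) E"
  unfolding subgroup_Aut_def
proof (intro conjI ballI)
  show "orientation_preserving E D \<subseteq> Aut E" "id \<in> orientation_preserving E D"
    by (auto simp: orientation_preserving_def Aut_def)
  show "f \<circ> g \<in> orientation_preserving E D"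
    if "f \<in> orientation_preserving E D" "g \<in> orientation_preserving E D" for f g
    using that by (simp add: orientation_preserving_def Aut_def bij_comp)
qed (rule orientation_preserving_inv)

lemma orientation_preserving_not_inverts_edge:
  assumes D: "orientation E D" and g: "g \<in> orientation_preserving E D"
  shows "\<not> inverts_edge E g u v"
proof
  assume "inverts_edge E g u v"
  then have "E u v" "g u = v" "g v = u" by (auto simp: inverts_edge_def)
  moreover have "D x y \<Longrightarrow> D (g x) (g y)" for x y
    using g by (simp add: orientation_preserving_def)
  ultimately have "D u v \<longleftrightarrow> D v u" by metis
  with \<open>E u v\<close> D show False by (auto simp: orientation_def)
qed

definition pair_orbit :: "('a \<Rightarrow> 'a) set \<Rightarrow> 'a \<times> 'a \<Rightarrow> ('a \<times> 'a) set" where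
  "pair_orbit \<Gamma> p = (\<lambda>g. map_prod g g p) ` \<Gamma>"

definition edge_orbit :: "('a \<Rightarrow> 'a) set \<Rightarrow> 'a \<Rightarrow> 'a \<Rightarrow> ('a \<times> 'a) set" where
  "edge_orbit \<Gamma> u v = pair_orbit \<Gamma> (u, v) \<union> pair_orbit \<Gamma> (v, u)"

definition edge_orbit_rep :: "('a \<Rightarrow> 'a) set \<Rightarrow> 'a \<Rightarrow> 'a \<Rightarrow> 'a \<times> 'a" where
  "edge_orbit_rep \<Gamma> u v = (SOME p. p \<in> edge_orbit \<Gamma> u v)"

definition induced_orientation ::
    "('a \<Rightarrow> 'a) set \<Rightarrow> ('a \<Rightarrow> 'a \<Rightarrow> bool) \<Rightarrow> 'a \<Rightarrow> 'a \<Rightarrow> bool" where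
  "induced_orientation \<Gamma> E u v \<longleftrightarrow> E u v \<and> (u, v) \<in> pair_orbit \<Gamma> (edge_orbit_rep \<Gamma> u v)"

lemma pair_orbit_self: "subgroup_Aut \<Gamma> E \<Longrightarrow> p \<in> pair_orbit \<Gamma> p"
  unfolding pair_orbit_def by (rule rev_image_eqI[OF subgroup_Aut_id]) (simp_all add: map_prod.id)

lemma pair_orbit_sym:
  assumes \<Gamma>: "subgroup_Aut \<Gamma> E" and "p \<in> pair_orbit \<Gamma> q"
  shows "q \<in> pair_orbit \<Gamma> p"
proof -
  obtain g where g: "g \<in> \<Gamma>" "p = map_prod g g q"
    using \<open>p \<in> pair_orbit \<Gamma> q\<close> by (auto simp: pair_orbit_def)
  then have "q = map_prod (inv g) (inv g) p"
    using subgroup_Aut_inv_apply[OF \<Gamma>] by (cases q) simp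
  then show ?thesis
    using subgroup_Aut_inv[OF \<Gamma> g(1)] by (auto simp: pair_orbit_def)
qed

lemma pair_orbit_trans:
  assumes \<Gamma>: "subgroup_Aut \<Gamma> E" and "p \<in> pair_orbit \<Gamma> q" and "q \<in> pair_orbit \<Gamma> r"
  shows "p \<in> pair_orbit \<Gamma> r"
proof -
  obtain g h where "g \<in> \<Gamma>" "p = map_prod g g q" "h \<in> \<Gamma>" "q = map_prod h h r"
    using assms(2,3) by (auto simp: pair_orbit_def)
  then have "g \<circ> h \<in> \<Gamma>" "p = map_prod (g \<circ> h) (g \<circ> h) r"
    using subgroup_Aut_comp[OF \<Gamma>] by (simp_all add: prod.map_comp)
  then show ?thesis by (auto simp: pair_orbit_def)
qed

lemma pair_orbit_eq:
  assumes \<Gamma>: "subgroup_Aut \<Gamma> E" and pq: "p \<in> pair_orbit \<Gamma> q"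
  shows "pair_orbit \<Gamma> p = pair_orbit \<Gamma> q"
  using pair_orbit_trans[OF \<Gamma> _ pq] pair_orbit_trans[OF \<Gamma> _ pair_orbit_sym[OF \<Gamma> pq]]
  by blast

lemma pair_orbit_apply_eq:
  assumes "subgroup_Aut \<Gamma> E" and "h \<in> \<Gamma>"
  shows "pair_orbit \<Gamma> (h u, h v) = pair_orbit \<Gamma> (u, v)"
proof (rule pair_orbit_eq[OF assms(1)])
  show "(h u, h v) \<in> pair_orbit \<Gamma> (u, v)"
    unfolding pair_orbit_def by (rule rev_image_eqI[OF assms(2)]) simp
qed

lemma edge_orbit_rep_commute: "edge_orbit_rep \<Gamma> u v = edge_orbit_rep \<Gamma> v u"
  by (simp add: edge_orbit_rep_def edge_orbit_def Un_commute)

lemma edge_orbit_rep_apply_eq: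
  "subgroup_Aut \<Gamma> E \<Longrightarrow> h \<in> \<Gamma> \<Longrightarrow> edge_orbit_rep \<Gamma> (h u) (h v) = edge_orbit_rep \<Gamma> u v"
  by (simp add: edge_orbit_rep_def edge_orbit_def pair_orbit_apply_eq)

lemma edge_orbit_rep_mem:
  assumes "subgroup_Aut \<Gamma> E"
  shows "edge_orbit_rep \<Gamma> u v \<in> pair_orbit \<Gamma> (u, v) \<union> pair_orbit \<Gamma> (v, u)"
  unfolding edge_orbit_rep_def edge_orbit_def
  by (rule someI[of _ "(u, v)"]) (simp add: pair_orbit_self[OF assms])

lemma orientation_induced_orientation:
  assumes "symp E" and \<Gamma>: "subgroup_Aut \<Gamma> E"
    and no_inversion: "\<And>g u v. g \<in> \<Gamma> \<Longrightarrow> \<not> inverts_edge E g u v"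
  shows "orientation E (induced_orientation \<Gamma> E)"
  unfolding orientation_def
proof (intro conjI allI impI)
  fix u v
  show "induced_orientation \<Gamma> E u v \<Longrightarrow> E u v"
    by (simp add: induced_orientation_def)
  assume "E u v"
  then have "E v u" using \<open>symp E\<close> by (blast dest: sympD)
  define r where "r = edge_orbit_rep \<Gamma> u v"
  have "r \<in> pair_orbit \<Gamma> (u, v) \<union> pair_orbit \<Gamma> (v, u)"
    unfolding r_def by (rule edge_orbit_rep_mem[OF \<Gamma>])
  then have "(u, v) \<in> pair_orbit \<Gamma> r \<or> (v, u) \<in> pair_orbit \<Gamma> r"
  proof
    assume "r \<in> pair_orbit \<Gamma> (u, v)"
    from pair_orbit_sym[OF \<Gamma> this] show ?thesis by simp
  next
    assume "r \<in> pair_orbit \<Gamma> (v, u)"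
    from pair_orbit_sym[OF \<Gamma> this] show ?thesis by simp
  qed
  moreover have "\<not> ((u, v) \<in> pair_orbit \<Gamma> r \<and> (v, u) \<in> pair_orbit \<Gamma> r)"
  proof
    assume "(u, v) \<in> pair_orbit \<Gamma> r \<and> (v, u) \<in> pair_orbit \<Gamma> r"
    then have "(v, u) \<in> pair_orbit \<Gamma> (u, v)"
      using pair_orbit_eq[OF \<Gamma>, of "(u, v)" r] by simp
    then obtain g where "g \<in> \<Gamma>" "g u = v" "g v = u"
      by (auto simp: pair_orbit_def)
    with \<open>E u v\<close> no_inversion show False by (auto simp: inverts_edge_def)
  qed
  moreover have "edge_orbit_rep \<Gamma> v u = r"
    unfolding r_def by (rule edge_orbit_rep_commute)
  ultimately show "induced_orientation \<Gamma> E u v \<longleftrightarrow> \<not> induced_orientation \<Gamma> E v u"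
    using \<open>E u v\<close> \<open>E v u\<close> unfolding induced_orientation_def r_def[symmetric] by blast
qed

lemma subgroup_le_orientation_preserving:
  assumes \<Gamma>: "subgroup_Aut \<Gamma> E"
  shows "\<Gamma> \<subseteq> orientation_preserving E (induced_orientation \<Gamma> E)"
proof
  fix h assume h: "h \<in> \<Gamma>"
  have "induced_orientation \<Gamma> E (h u) (h v)" if "induced_orientation \<Gamma> E u v" for u v
  proof -
    have "(h u, h v) \<in> pair_orbit \<Gamma> (u, v)"
      unfolding pair_orbit_def by (rule rev_image_eqI[OF h]) simp
    moreover have "pair_orbit \<Gamma> (u, v) = pair_orbit \<Gamma> (edge_orbit_rep \<Gamma> u v)"
      by (rule pair_orbit_eq[OF \<Gamma>]) (use that in \<open>simp add: induced_orientation_def\<close>)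
    ultimately show ?thesis
      using that
      by (simp add: induced_orientation_def edge_orbit_rep_apply_eq[OF \<Gamma> h]
          subgroup_Aut_adj_iff[OF \<Gamma> h])
  qed
  moreover have "h \<in> Aut E"
    using \<Gamma> h by (auto simp: subgroup_Aut_def)
  ultimately show "h \<in> orientation_preserving E (induced_orientation \<Gamma> E)"
    by (simp add: orientation_preserving_def)
qed

lemma periodic_orientation_induced_orientation:
  assumes "symp E" and \<Gamma>: "subgroup_Aut \<Gamma> E" and "acts_quasi_transitively \<Gamma>"
    and no_inversion: "\<And>g u v. g \<in> \<Gamma> \<Longrightarrow> \<not> inverts_edge E g u v"
  shows "periodic_orientation E (induced_orientation \<Gamma> E)"
proof -
  have D: "orientation E (induced_orientation \<Gamma> E)"
    using \<open>symp E\<close> \<Gamma> no_inversion by (rule orientation_induced_orientation)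
  have "acts_quasi_transitively (orientation_preserving E (induced_orientation \<Gamma> E))"
    by (rule acts_quasi_transitively_supergroup[OF subgroup_Aut_orientation_preserving[OF D]
          subgroup_Aut_id[OF \<Gamma>] subgroup_le_orientation_preserving[OF \<Gamma>]]) fact
  with D show ?thesis
    by (simp add: periodic_orientation_def)
qed

theorem lemma2p10:
  fixes E :: "'a \<Rightarrow> 'a \<Rightarrow> bool"
  assumes "simple_graph E" and "locally_finite E" and "quasi_transitive E"
  shows "(\<exists>D. periodic_orientation E D) \<longleftrightarrow>
         (\<exists>\<Gamma>. subgroup_Aut \<Gamma> E \<and> acts_quasi_transitively \<Gamma> \<and>
              (\<forall>g\<in>\<Gamma>. \<forall>u v. \<not> inverts_edge E g u v))"
proof
  assume "\<exists>D. periodic_orientation E D"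
  then obtain D where D: "orientation E D"
    and qt: "acts_quasi_transitively (orientation_preserving E D)"
    by (auto simp: periodic_orientation_def)
  show "\<exists>\<Gamma>. subgroup_Aut \<Gamma> E \<and> acts_quasi_transitively \<Gamma> \<and>
          (\<forall>g\<in>\<Gamma>. \<forall>u v. \<not> inverts_edge E g u v)"
    using subgroup_Aut_orientation_preserving[OF D] qt
      orientation_preserving_not_inverts_edge[OF D] by blast
next
  assume "\<exists>\<Gamma>. subgroup_Aut \<Gamma> E \<and> acts_quasi_transitively \<Gamma> \<and>
          (\<forall>g\<in>\<Gamma>. \<forall>u v. \<not> inverts_edge E g u v)"
  then obtain \<Gamma> where "subgroup_Aut \<Gamma> E" "acts_quasi_transitively \<Gamma>"
    and "\<And>g u v. g \<in> \<Gamma> \<Longrightarrow> \<not> inverts_edge E g u v" by blast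
  moreover have "symp E"
    using \<open>simple_graph E\<close> unfolding simple_graph_def by (blast intro: sympI)
  ultimately show "\<exists>D. periodic_orientation E D"
    using periodic_orientation_induced_orientation by blast
qed

end
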